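(* Fix $p\ge3$. For $(\beta,h)\in[0,\infty)\times\mathbb R$: (1) $\sup_{x\in[-1,1]}H_{\beta,h,p}(x)\ge0$, with equality if and only if $(\beta,h)\in[0,\tilde\beta_p]\times\{0\}$. (2) Every local maximizer of $H_{\beta,h,p}$ on $[-1,1]$ lies in $(-1,1)$. (3) $H_{\beta,h,p}$ has at most two local maximizers if $p=3$ and at most three local maximizers if $p\ge4$. Moreover, $H_{\beta,h,p}$ has three global maximizers if and only if $p\ge4$ is even, $h=0$ and $\beta=\tilde\beta_p$.
   Context: $I(x)=\frac12[(1+x)\log(1+x)+(1-x)\log(1-x)]$ on $[-1,1]$ and $H_{\beta,h,p}(x)=\beta x^p+hx-I(x)$. $\tilde\beta_p=\sup\{\beta\ge0:\sup_{x\in[-1,1]}H_{\beta,0,p}(x)=0\}$. A global maximizer is a point where $H_{\beta,h,p}$ attains its supremum over $[-1,1]$. *)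

theory Defs
  imports "HOL-Analysis.Analysis"
begin

definition xlogx :: "real \<Rightarrow> real" where
  "xlogx t = (if t = 0 then 0 else t * ln t)"

definition Ifun :: "real \<Rightarrow> real" where
  "Ifun x = (xlogx (1 + x) + xlogx (1 - x)) / 2"

definition Hfun :: "real \<Rightarrow> real \<Rightarrow> nat \<Rightarrow> real \<Rightarrow> real" where
  "Hfun \<beta> h p x = \<beta> * x ^ p + h * x - Ifun x"

definition supH :: "real \<Rightarrow> real \<Rightarrow> nat \<Rightarrow> real" where
  "supH \<beta> h p = (SUP x\<in>{-1..1}. Hfun \<beta> h p x)"

definition beta_tilde :: "nat \<Rightarrow> real" where
  "beta_tilde p = Sup {\<beta>. \<beta> \<ge> 0 \<and> supH \<beta> 0 p = 0}"

definition is_local_max :: "(real \<Rightarrow> real) \<Rightarrow> real \<Rightarrow> bool" where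
  "is_local_max f x \<longleftrightarrow> x \<in> {-1..1} \<and>
     (\<exists>\<epsilon>>0. \<forall>y\<in>{-1..1}. \<bar>y - x\<bar> < \<epsilon> \<longrightarrow> f y \<le> f x)"

definition is_global_max :: "(real \<Rightarrow> real) \<Rightarrow> real \<Rightarrow> bool" where
  "is_global_max f x \<longleftrightarrow> x \<in> {-1..1} \<and> (\<forall>y\<in>{-1..1}. f y \<le> f x)"

end

theory Submission
  imports Defs "HOL-Real_Asymp.Real_Asymp"
begin

text \<open>
  The derivative H' x = beta p x^(p-1) + h - artanh x tends to -infinity at 1, and by the reflection
  x \<mapsto> -x also no local maximizer sits at -1. Between two local maxima of a smooth function
  lies an interior minimum, so m local maxima give 2m - 1 critical points and, by Rolle, 2m - 2
  zeros of H''. On (0,1) the equation H'' = 0 reads beta p (p-1) (x^(p-2) - x^p) = 1 with a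
  unimodal left-hand side, so it has at most two solutions there; H'' < 0 on (-1,0] for odd p,
  and H'' is even for even p. Hence there are at most 2 resp. 3 local maximizers.

  H 0 = 0 gives sup H \<ge> 0. If h \<noteq> 0 then H'(0) = h, so 0 is not a maximizer and sup H > 0.
  For h = 0, sup H = 0 amounts to beta x^p \<le> I x on [-1,1], a closed condition, down-closed in
  beta, so it holds exactly for beta in [0, beta_tilde]. Three global maximizers: for even p and
  h \<noteq> 0 every maximizer x satisfies h x > 0, which confines them to a half interval carrying
  at most two local maxima; below beta_tilde the only maximizer is 0, above it the maximizers come
  in pairs \<plusminus>x avoiding 0. At beta_tilde the maximum of H over {|x| \<ge> delta} must be 0, since
  otherwise beta could be raised (I x \<ge> x^2/2 controls H near 0); this gives a maximizer m \<noteq> 0,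
  and then 0, m, -m are three maximizers.
\<close>

subsection \<open>Counting local maxima via zeros of the second derivative\<close>

lemma card_le_Suc_card_if_separated:
  fixes S T :: "'a::linorder set"
  assumes "finite S" "finite T"
    and "\<And>u v. u \<in> S \<Longrightarrow> v \<in> S \<Longrightarrow> u < v \<Longrightarrow> S \<inter> {u<..<v} = {} \<Longrightarrow> \<exists>c\<in>T. u < c \<and> c < v"
  shows "card S \<le> Suc (card T)"
  using assms
proof (induction S arbitrary: T rule: finite_linorder_max_induct)
  case empty
  show ?case by simp
next
  case (insert b A)
  show ?case
  proof (cases "A = {}")
    case True
    then show ?thesis by simp
  next
    case False
    define m where "m = Max A"
    have m: "m \<in> A" "m < b" "\<And>a. a \<in> A \<Longrightarrow> a \<le> m"
      using False insert.hyps by (auto simp: m_def)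
    have "insert b A \<inter> {m<..<b} = {}"
      using m(3) by fastforce
    then obtain c where c: "c \<in> T" "m < c" "c < b"
      using insert.prems(2)[of m b] m by auto
    have "card A \<le> Suc (card (T \<inter> {..<m}))"
    proof (rule insert.IH)
      show "finite (T \<inter> {..<m})"
        using insert.prems(1) by simp
    next
      fix u v assume uv: "u \<in> A" "v \<in> A" "u < v" "A \<inter> {u<..<v} = {}"
      then have "insert b A \<inter> {u<..<v} = {}"
        using insert.hyps(2) by auto
      then obtain c' where "c' \<in> T" "u < c'" "c' < v"
        using insert.prems(2)[of u v] uv by auto
      then show "\<exists>c\<in>T \<inter> {..<m}. u < c \<and> c < v"
        using m(3)[OF uv(2)] by auto
    qed
    also have "Suc (card (T \<inter> {..<m})) \<le> card T"
    proof -
      have "T \<inter> {..<m} \<subset> T"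
        using c by (auto simp: less_le_not_le)
      then show ?thesis
        using insert.prems(1) by (simp add: Suc_leI psubset_card_mono)
    qed
    finally show ?thesis
      using insert.hyps less_irrefl by fastforce
  qed
qed

lemma finite_zeros_if_finite_deriv_zeros:
  fixes f f' :: "real \<Rightarrow> real"
  assumes f': "\<And>x. a < x \<Longrightarrow> x < b \<Longrightarrow> (f has_real_derivative f' x) (at x)"
    and Z: "finite Z" "{x \<in> {a<..<b}. f' x = 0} \<subseteq> Z"
  shows "finite {x \<in> {a<..<b}. f x = 0} \<and> card {x \<in> {a<..<b}. f x = 0} \<le> Suc (card Z)"
proof (rule finite_if_finite_subsets_card_bdd)
  fix F assume F: "F \<subseteq> {x \<in> {a<..<b}. f x = 0}" "finite F"
  show "card F \<le> Suc (card Z)"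
  proof (rule card_le_Suc_card_if_separated[OF F(2) Z(1)])
    fix u v assume uv: "u \<in> F" "v \<in> F" "u < v"
    have ab: "a < u" "v < b" and "f u = 0" "f v = 0"
      using subsetD[OF F(1) uv(1)] subsetD[OF F(1) uv(2)] by simp_all
    moreover have "continuous_on {u..v} f"
      using ab by (intro continuous_at_imp_continuous_on ballI DERIV_isCont[OF f']) auto
    moreover have "f differentiable (at x)" if "u < x" "x < v" for x
      unfolding real_differentiable_def using f'[of x] ab that by auto
    ultimately obtain c where c: "u < c" "c < v" "(f has_real_derivative 0) (at c)"
      using Rolle[OF uv(3)] by (metis \<open>f u = 0\<close> \<open>f v = 0\<close>)
    then have "f' c = 0"
      using ab by (intro DERIV_unique[OF f']) auto
    then have "c \<in> Z"
      using subsetD[OF Z(2), of c] ab c by simp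
    then show "\<exists>c\<in>Z. u < c \<and> c < v"
      using c by blast
  qed
qed

definition local_max_on :: "(real \<Rightarrow> real) \<Rightarrow> real set \<Rightarrow> real \<Rightarrow> bool" where
  "local_max_on f U x \<longleftrightarrow> x \<in> U \<and> (\<exists>e>0. \<forall>y\<in>U. \<bar>y - x\<bar> < e \<longrightarrow> f y \<le> f x)"

lemma local_max_on_subset:
  "local_max_on f U x \<Longrightarrow> V \<subseteq> U \<Longrightarrow> x \<in> V \<Longrightarrow> local_max_on f V x"
  unfolding local_max_on_def by blast

lemma deriv_zero_if_local_max_on_interval:
  assumes "local_max_on f {a<..<b} x" "(f has_real_derivative D) (at x)"
  shows "D = 0"
proof -
  obtain e where x: "a < x" "x < b"
    and e: "e > 0" "\<forall>y\<in>{a<..<b}. \<bar>y - x\<bar> < e \<longrightarrow> f y \<le> f x"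
    using assms(1) unfolding local_max_on_def by auto
  show ?thesis
  proof (rule DERIV_local_max[OF assms(2)])
    show "0 < min e (min (x - a) (b - x))"
      using e x by simp
    show "\<forall>y. \<bar>x - y\<bar> < min e (min (x - a) (b - x)) \<longrightarrow> f y \<le> f x"
      using e(2) by (auto simp: abs_if split: if_splits)
  qed
qed

lemma ex_interior_min_between_local_max_on:
  fixes f :: "real \<Rightarrow> real"
  assumes "continuous_on {u..v} f"
    and u: "local_max_on f {a<..<b} u" and v: "local_max_on f {a<..<b} v" and "u < v"
  shows "\<exists>w. u < w \<and> w < v \<and> (\<forall>y\<in>{u..v}. f w \<le> f y)"
proof -
  obtain eu ev where ab: "a < u" "v < b" and "eu > 0" "ev > 0"
    and eu: "\<forall>y\<in>{a<..<b}. \<bar>y - u\<bar> < eu \<longrightarrow> f y \<le> f u"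
    and ev: "\<forall>y\<in>{a<..<b}. \<bar>y - v\<bar> < ev \<longrightarrow> f y \<le> f v"
    using u v unfolding local_max_on_def by auto
  define wu where "wu = u + min eu (v - u) / 2"
  define wv where "wv = v - min ev (v - u) / 2"
  have wu: "u < wu" "wu < v" "\<bar>wu - u\<bar> < eu"
    using \<open>eu > 0\<close> \<open>u < v\<close> by (auto simp: wu_def min_def field_simps)
  have wv: "u < wv" "wv < v" "\<bar>wv - v\<bar> < ev"
    using \<open>ev > 0\<close> \<open>u < v\<close> by (auto simp: wv_def min_def field_simps)
  have "f wu \<le> f u" "f wv \<le> f v"
    using eu ev wu wv ab by auto
  obtain z where z: "z \<in> {u..v}" "\<forall>y\<in>{u..v}. f z \<le> f y"
    using continuous_attains_inf[of "{u..v}" f] assms(1) \<open>u < v\<close> by auto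
  \<comment> \<open>an endpoint minimum is also attained just inside, since both endpoints are local maxima\<close>
  have "\<exists>w. u < w \<and> w < v \<and> f w \<le> f z"
  proof (cases "z = u \<or> z = v")
    case True
    then show ?thesis
      using wu wv \<open>f wu \<le> f u\<close> \<open>f wv \<le> f v\<close> by blast
  next
    case False
    then show ?thesis
      using z(1) by (intro exI[of _ z]) auto
  qed
  then obtain w where w: "u < w" "w < v" "f w \<le> f z"
    by blast
  have "f w \<le> f y" if "y \<in> {u..v}" for y
    using z(2) that w(3) by fastforce
  then show ?thesis
    using w(1,2) by blast
qed

lemma deriv_zero_between_local_max_on_interval:
  fixes f f' :: "real \<Rightarrow> real"
  assumes f': "\<And>x. a < x \<Longrightarrow> x < b \<Longrightarrow> (f has_real_derivative f' x) (at x)"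
    and u: "local_max_on f {a<..<b} u" and v: "local_max_on f {a<..<b} v" and "u < v"
  shows "\<exists>w. u < w \<and> w < v \<and> f' w = 0"
proof -
  have ab: "a < u" "v < b"
    using u v by (simp_all add: local_max_on_def)
  then have "continuous_on {u..v} f"
    by (intro continuous_at_imp_continuous_on ballI DERIV_isCont[OF f']) auto
  then obtain w where w: "u < w" "w < v" and min_w: "\<forall>y\<in>{u..v}. f w \<le> f y"
    using ex_interior_min_between_local_max_on[OF _ u v \<open>u < v\<close>] by blast
  have "f' w = 0"
  proof (rule DERIV_local_min[OF f'])
    show "a < w" "w < b" "0 < min (w - u) (v - w)"
      using w ab by auto
    show "\<forall>y. \<bar>w - y\<bar> < min (w - u) (v - w) \<longrightarrow> f w \<le> f y"
      using min_w by (auto simp: abs_if split: if_splits)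
  qed
  then show ?thesis
    using w by blast
qed

lemma local_max_on_interval_count:
  fixes f f' f'' :: "real \<Rightarrow> real"
  assumes f': "\<And>x. a < x \<Longrightarrow> x < b \<Longrightarrow> (f has_real_derivative f' x) (at x)"
    and f'': "\<And>x. a < x \<Longrightarrow> x < b \<Longrightarrow> (f' has_real_derivative f'' x) (at x)"
    and Z: "finite Z" "{x \<in> {a<..<b}. f'' x = 0} \<subseteq> Z"
  shows "finite {x. local_max_on f {a<..<b} x}
    \<and> 2 * card {x. local_max_on f {a<..<b} x} \<le> card Z + 2"
proof -
  define C where "C = {x \<in> {a<..<b}. f' x = 0}"
  define M where "M = {x. local_max_on f {a<..<b} x}"
  have C: "finite C" "card C \<le> Suc (card Z)"
    using finite_zeros_if_finite_deriv_zeros[OF f'' Z] by (simp_all add: C_def)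
  have "M \<subseteq> C"
    using f' deriv_zero_if_local_max_on_interval by (force simp: M_def C_def local_max_on_def)
  then have M: "finite M"
    using C(1) finite_subset by blast
  have "card M \<le> Suc (card (C - M))"
  proof (rule card_le_Suc_card_if_separated[OF M])
    show "finite (C - M)"
      using C(1) by simp
    fix u v assume uv: "u \<in> M" "v \<in> M" "u < v" "M \<inter> {u<..<v} = {}"
    have max_uv: "local_max_on f {a<..<b} u" "local_max_on f {a<..<b} v"
      using uv by (simp_all add: M_def)
    then obtain w where w: "u < w" "w < v" "f' w = 0"
      using deriv_zero_between_local_max_on_interval[OF f' _ _ uv(3)] by blast
    moreover have "a < u" "v < b"
      using max_uv by (simp_all add: local_max_on_def)
    ultimately have "w \<in> C"
      by (simp add: C_def)
    moreover have "w \<notin> M"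
      using uv(4) w by auto
    ultimately show "\<exists>c\<in>C - M. u < c \<and> c < v"
      using w by blast
  qed
  moreover have "card (C - M) = card C - card M" "card M \<le> card C"
    using card_Diff_subset[OF M \<open>M \<subseteq> C\<close>] card_mono[OF C(1) \<open>M \<subseteq> C\<close>] by auto
  ultimately have "2 * card M \<le> card Z + 2"
    using C(2) by linarith
  then show ?thesis
    using M by (simp add: M_def)
qed

lemma card_level_set_unimodal:
  fixes g :: "real \<Rightarrow> real"
  assumes "strict_mono_on {0..s} g" "strict_antimono_on {s..} g"
  shows "finite (g -` {c} \<inter> {0..}) \<and> card (g -` {c} \<inter> {0..}) \<le> 2"
proof -
  define L R where "L = g -` {c} \<inter> {0..s}" and "R = g -` {c} \<inter> {s..}"
  have inj: "inj_on g {0..s}" "inj_on g {s..}"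
    using assms strict_mono_on_imp_inj_on strict_antimono_iff_antimono by blast+
  have fin: "finite (L \<union> R)"
    using finite_vimage_IntI[OF _ inj(1), of "{c}"] finite_vimage_IntI[OF _ inj(2), of "{c}"]
    by (simp add: L_def R_def)
  have sub: "g -` {c} \<inter> {0..} \<subseteq> L \<union> R"
    by (auto simp: L_def R_def)
  have "card (g -` {c} \<inter> {0..}) \<le> card (L \<union> R)"
    by (rule card_mono[OF fin sub])
  also have "\<dots> \<le> card L + card R"
    by (rule card_Un_le)
  also have "\<dots> \<le> 2"
    using card_vimage_inj_on_le[OF inj(1), of "{c}"] card_vimage_inj_on_le[OF inj(2), of "{c}"]
    by (simp add: L_def R_def)
  finally show ?thesis
    using finite_subset[OF sub fin] by simp
qed

subsection \<open>The functions I and H and their derivatives\<close>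

lemma xlogx_has_real_derivative:
  assumes "t > 0"
  shows "(xlogx has_real_derivative ln t + 1) (at t)"
proof -
  have "((\<lambda>t. t * ln t) has_real_derivative ln t + 1) (at t)"
    using assms by (auto intro!: derivative_eq_intros)
  then show ?thesis
    by (rule has_field_derivative_transform_within_open[where S="{0<..}"])
      (use assms in \<open>auto simp: xlogx_def\<close>)
qed

lemma continuous_on_xlogx: "continuous_on {0..} xlogx"
proof -
  have "continuous (at t within {0..}) xlogx" if "t \<ge> 0" for t
  proof (cases "t = 0")
    case True
    have "((\<lambda>t::real. t * ln t) \<longlongrightarrow> 0) (at_right 0)"
      by real_asymp
    then have "(xlogx \<longlongrightarrow> 0) (at_right 0)"
      by (rule Lim_transform_within[where d=1]) (auto simp: xlogx_def)
    then show ?thesis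
      using True by (simp add: continuous_within xlogx_def at_within_Ici_at_right)
  next
    case False
    then have "isCont xlogx t"
      using that by (intro DERIV_isCont[OF xlogx_has_real_derivative]) simp
    then show ?thesis
      using continuous_at_imp_continuous_at_within by blast
  qed
  then show ?thesis
    by (simp add: continuous_on_eq_continuous_within)
qed

lemma continuous_on_Ifun: "continuous_on {-1..1} Ifun"
proof -
  have "continuous_on {-1..1} (\<lambda>x. xlogx (1 + x))" "continuous_on {-1..1} (\<lambda>x. xlogx (1 - x))"
    by (rule continuous_on_compose2[OF continuous_on_xlogx], auto intro!: continuous_intros)+
  then show ?thesis
    unfolding Ifun_def[abs_def] by (intro continuous_intros) auto
qed

lemma Ifun_has_real_derivative:
  assumes "-1 < x" "x < 1"
  shows "(Ifun has_real_derivative artanh x) (at x)"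
proof -
  have "((\<lambda>x. xlogx (1 + x)) has_real_derivative (ln (1 + x) + 1) * 1) (at x)"
    "((\<lambda>x. xlogx (1 - x)) has_real_derivative (ln (1 - x) + 1) * (-1)) (at x)"
    by (rule DERIV_chain2[OF xlogx_has_real_derivative];
        use assms in \<open>auto intro!: derivative_eq_intros\<close>)+
  from DERIV_cdivide[OF DERIV_add[OF this], of 2]
  have "(Ifun has_real_derivative (ln (1 + x) - ln (1 - x)) / 2) (at x)"
    unfolding Ifun_def[abs_def] by simp
  moreover have "(ln (1 + x) - ln (1 - x)) / 2 = artanh x"
    using assms by (simp add: artanh_def ln_div)
  ultimately show ?thesis
    by metis
qed

lemma Ifun_minus: "Ifun (- x) = Ifun x"
  by (simp add: Ifun_def)

lemma Ifun_0: "Ifun 0 = 0"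
  by (simp add: Ifun_def xlogx_def)

lemma Ifun_1: "Ifun 1 = ln 2"
  by (simp add: Ifun_def xlogx_def)

lemma artanh_ge_self:
  fixes t :: real
  assumes "0 \<le> t" "t < 1"
  shows "t \<le> artanh t"
proof -
  have "artanh 0 - 0 \<le> artanh t - t"
  proof (rule DERIV_nonneg_imp_increasing_open[OF assms(1)])
    fix y :: real assume y: "0 < y" "y < t"
    then have "0 < 1 - y^2" "1 - y^2 \<le> 1"
      using assms by (simp_all add: power_less_one_iff)
    then have "0 \<le> 1 / (1 - y^2) - 1"
      by (simp add: le_divide_eq_1_pos)
    moreover have "((\<lambda>y. artanh y - y) has_real_derivative 1 / (1 - y^2) - 1) (at y)"
      using y assms by (auto intro!: derivative_eq_intros)
    ultimately show "\<exists>l. ((\<lambda>y. artanh y - y) has_real_derivative l) (at y) \<and> 0 \<le> l"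
      by blast
  next
    show "continuous_on {0..t} (\<lambda>y. artanh y - y)"
      using assms by (intro continuous_intros) auto
  qed
  then show ?thesis
    by simp
qed

lemma Ifun_ge_half_square:
  assumes "\<bar>x\<bar> < 1"
  shows "x^2 / 2 \<le> Ifun x"
proof -
  have *: "t^2 / 2 \<le> Ifun t" if t: "0 \<le> t" "t < 1" for t
  proof -
    have "Ifun 0 - 0^2 / 2 \<le> Ifun t - t^2 / 2"
    proof (rule DERIV_nonneg_imp_increasing_open[OF t(1)])
      fix y assume y: "0 < y" "y < t"
      have "((\<lambda>y. Ifun y - y^2 / 2) has_real_derivative artanh y - y) (at y)"
        using y t by (auto intro!: derivative_eq_intros Ifun_has_real_derivative)
      then show "\<exists>l. ((\<lambda>y. Ifun y - y^2 / 2) has_real_derivative l) (at y) \<and> 0 \<le> l"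
        using artanh_ge_self[of y] y t by auto
    next
      show "continuous_on {0..t} (\<lambda>y. Ifun y - y^2 / 2)"
        using t by (intro continuous_intros continuous_on_subset[OF continuous_on_Ifun]) auto
    qed
    then show ?thesis
      by (simp add: Ifun_0)
  qed
  show ?thesis
  proof (cases "0 \<le> x")
    case True
    then show ?thesis
      using * assms by simp
  next
    case False
    then show ?thesis
      using *[of "- x"] assms by (simp add: Ifun_minus)
  qed
qed

lemma Ifun_nonneg:
  assumes "x \<in> {-1..1}"
  shows "0 \<le> Ifun x"
proof (cases "\<bar>x\<bar> < 1")
  case True
  have "0 \<le> x^2 / 2"
    by simp
  then show ?thesis
    using Ifun_ge_half_square[OF True] by linarith
next
  case False
  then have "x = 1 \<or> x = -1"
    using assms by auto
  then have "Ifun x = ln 2"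
    by (metis Ifun_1 Ifun_minus)
  then show ?thesis
    by simp
qed

definition Hfun' :: "real \<Rightarrow> real \<Rightarrow> nat \<Rightarrow> real \<Rightarrow> real" where
  "Hfun' \<beta> h p x = \<beta> * real p * x ^ (p - 1) + h - artanh x"

definition Hfun'' :: "real \<Rightarrow> nat \<Rightarrow> real \<Rightarrow> real" where
  "Hfun'' \<beta> p x = \<beta> * real p * real (p - 1) * x ^ (p - 2) - 1 / (1 - x^2)"

lemma continuous_on_Hfun: "continuous_on {-1..1} (Hfun \<beta> h p)"
  unfolding Hfun_def[abs_def] by (intro continuous_intros continuous_on_Ifun)

lemma Hfun_has_real_derivative:
  assumes "-1 < x" "x < 1"
  shows "(Hfun \<beta> h p has_real_derivative Hfun' \<beta> h p x) (at x)"
  unfolding Hfun_def[abs_def] Hfun'_def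
  using assms by (auto intro!: derivative_eq_intros Ifun_has_real_derivative)

lemma Hfun'_has_real_derivative:
  assumes "-1 < x" "x < 1"
  shows "(Hfun' \<beta> h p has_real_derivative Hfun'' \<beta> p x) (at x)"
  unfolding Hfun'_def[abs_def] Hfun''_def
  using assms by (auto intro!: derivative_eq_intros simp: numeral_2_eq_2)

lemma Hfun_minus: "Hfun \<beta> h p (- x) = Hfun ((-1) ^ p * \<beta>) (- h) p x"
  by (simp add: Hfun_def Ifun_minus power_minus[of x] mult.left_commute)

lemma Hfun_0: "0 < p \<Longrightarrow> Hfun \<beta> h p 0 = 0"
  by (simp add: Hfun_def Ifun_0)

lemma Hfun'_0: "2 \<le> p \<Longrightarrow> Hfun' \<beta> h p 0 = h"
  by (simp add: Hfun'_def)

subsection \<open>Local maximizers are interior\<close>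

lemma eventually_Hfun'_neg_at_left_1: "eventually (\<lambda>x. Hfun' \<beta> h p x < 0) (at_left 1)"
proof -
  have "filterlim artanh at_top (at_left (1::real))"
    unfolding artanh_def by real_asymp
  then have "eventually (\<lambda>x. \<bar>\<beta>\<bar> * real p + \<bar>h\<bar> < artanh x) (at_left 1)"
    by (simp add: filterlim_at_top_dense)
  moreover have "eventually (\<lambda>x. x \<in> {0<..<1}) (at_left (1::real))"
    by (rule eventually_at_left_real) simp
  ultimately show ?thesis
  proof eventually_elim
    case (elim x)
    have "\<bar>x ^ (p - 1)\<bar> \<le> 1"
      using elim(2) by (simp add: power_le_one)
    then have "\<bar>\<beta> * real p * x ^ (p - 1)\<bar> \<le> \<bar>\<beta>\<bar> * real p"
      by (simp add: abs_mult mult_left_le)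
    then show ?case
      using elim(1) by (simp add: Hfun'_def)
  qed
qed

lemma not_is_local_max_Hfun_1: "\<not> is_local_max (Hfun \<beta> h p) 1"
proof
  assume "is_local_max (Hfun \<beta> h p) 1"
  then obtain e where e: "e > 0" "\<forall>y\<in>{-1..1}. \<bar>y - 1\<bar> < e \<longrightarrow> Hfun \<beta> h p y \<le> Hfun \<beta> h p 1"
    by (auto simp: is_local_max_def)
  obtain d where d: "d < 1" "\<forall>y>d. y < 1 \<longrightarrow> Hfun' \<beta> h p y < 0"
    using eventually_Hfun'_neg_at_left_1[of \<beta> h p] by (auto simp: eventually_at_left_field)
  define y where "y = max (max d 0) (1 - e / 2)"
  have y: "0 \<le> y" "d \<le> y" "y < 1" "\<bar>y - 1\<bar> < e"
    using d e by (auto simp: y_def)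
  have "Hfun \<beta> h p 1 < Hfun \<beta> h p y"
  proof (rule DERIV_neg_imp_decreasing_open[OF y(3)])
    fix x assume "y < x" "x < 1"
    then show "\<exists>l. (Hfun \<beta> h p has_real_derivative l) (at x) \<and> l < 0"
      using Hfun_has_real_derivative[of x] d y by force
  next
    show "continuous_on {y..1} (Hfun \<beta> h p)"
      using continuous_on_subset[OF continuous_on_Hfun] y by force
  qed
  moreover have "Hfun \<beta> h p y \<le> Hfun \<beta> h p 1"
    using e y by simp
  ultimately show False
    by simp
qed

lemma is_local_max_reflect:
  assumes "is_local_max f x"
  shows "is_local_max (\<lambda>y. f (- y)) (- x)"
proof -
  obtain e where x: "x \<in> {-1..1}" and "e > 0"
    and e: "\<forall>y\<in>{-1..1}. \<bar>y - x\<bar> < e \<longrightarrow> f y \<le> f x"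
    using assms by (auto simp: is_local_max_def)
  have "f (- y) \<le> f (- (- x))" if "y \<in> {-1..1}" "\<bar>y - - x\<bar> < e" for y
  proof -
    have "- y \<in> {-1..1}" "\<bar>- y - x\<bar> < e"
      using that by (auto simp: abs_minus_commute)
    then show ?thesis
      using e by simp
  qed
  then show ?thesis
    unfolding is_local_max_def using x \<open>e > 0\<close> by auto
qed

lemma is_local_max_Hfun_interior:
  assumes "is_local_max (Hfun \<beta> h p) x"
  shows "-1 < x \<and> x < 1"
proof -
  have "x \<noteq> 1"
    using assms not_is_local_max_Hfun_1 by blast
  moreover have "x \<noteq> -1"
  proof
    assume "x = -1"
    then have "is_local_max (Hfun ((-1) ^ p * \<beta>) (- h) p) 1"
      using is_local_max_reflect[OF assms] by (simp add: Hfun_minus)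
    then show False
      using not_is_local_max_Hfun_1 by blast
  qed
  moreover have "x \<in> {-1..1}"
    using assms by (simp add: is_local_max_def)
  ultimately show ?thesis
    by auto
qed

lemma is_local_max_Hfun_iff:
  "is_local_max (Hfun \<beta> h p) x \<longleftrightarrow> local_max_on (Hfun \<beta> h p) {-1<..<1} x"
proof
  assume max: "is_local_max (Hfun \<beta> h p) x"
  then have "local_max_on (Hfun \<beta> h p) {-1..1} x"
    by (simp add: is_local_max_def local_max_on_def)
  moreover have "{-1<..<1} \<subseteq> {-1..1::real}"
    by auto
  moreover have "x \<in> {-1<..<1}"
    using is_local_max_Hfun_interior[OF max] by simp
  ultimately show "local_max_on (Hfun \<beta> h p) {-1<..<1} x"
    by (rule local_max_on_subset)
next
  assume "local_max_on (Hfun \<beta> h p) {-1<..<1} x"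
  then obtain e where x: "-1 < x" "x < 1" and e: "e > 0"
    and max: "\<forall>y\<in>{-1<..<1}. \<bar>y - x\<bar> < e \<longrightarrow> Hfun \<beta> h p y \<le> Hfun \<beta> h p x"
    by (auto simp: local_max_on_def)
  have "Hfun \<beta> h p y \<le> Hfun \<beta> h p x" if "\<bar>y - x\<bar> < min e (1 - \<bar>x\<bar>)" for y
  proof -
    have "\<bar>y\<bar> < 1"
      using that abs_triangle_ineq[of "y - x" x] by simp
    then show ?thesis
      using max that by (simp add: abs_less_iff)
  qed
  moreover have "0 < min e (1 - \<bar>x\<bar>)"
    using e x by simp
  ultimately show "is_local_max (Hfun \<beta> h p) x"
    unfolding is_local_max_def using x by (intro conjI exI[of _ "min e (1 - \<bar>x\<bar>)"]) auto
qed

subsection \<open>Number of local maximizers\<close>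

lemma power_diff_power_has_real_derivative:
  fixes k :: nat
  assumes "1 \<le> k"
  shows "((\<lambda>x::real. x ^ k - x ^ (k + 2))
    has_real_derivative x ^ (k - 1) * (real k - (real k + 2) * x^2)) (at x)"
proof -
  have "k + 2 - 1 = (k - 1) + 2"
    using assms by simp
  then have "x ^ (k + 2 - 1) = x ^ (k - 1) * x^2"
    by (simp only: power_add)
  then show ?thesis
    using DERIV_diff[OF DERIV_pow[of k x] DERIV_pow[of "k + 2" x]] by (simp add: algebra_simps)
qed

lemma power_diff_power_unimodal:
  fixes k :: nat
  assumes "1 \<le> k"
  defines "s \<equiv> sqrt (real k / (real k + 2))"
  shows "strict_mono_on {0..s} (\<lambda>x::real. x ^ k - x ^ (k + 2))"
    and "strict_antimono_on {s..} (\<lambda>x::real. x ^ k - x ^ (k + 2))"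
proof -
  define g where "g = (\<lambda>x::real. x ^ k - x ^ (k + 2))"
  have g': "(g has_real_derivative x ^ (k - 1) * (real k - (real k + 2) * x^2)) (at x)" for x
    unfolding g_def by (rule power_diff_power_has_real_derivative[OF assms(1)])
  have cont: "continuous_on A g" for A
    unfolding g_def by (intro continuous_intros)
  have s: "0 \<le> s" "s^2 = real k / (real k + 2)"
    by (simp_all add: s_def)
  have sign: "real k - (real k + 2) * y^2 = (real k + 2) * (s^2 - y^2)" for y
    using s(2) by (simp add: field_simps)
  show "strict_mono_on {0..s} (\<lambda>x::real. x ^ k - x ^ (k + 2))"
    unfolding g_def[symmetric]
  proof (rule strict_mono_onI)
    fix u v assume uv: "u \<in> {0..s}" "v \<in> {0..s}" "u < v"
    show "g u < g v"
    proof (rule DERIV_pos_imp_increasing_open[OF uv(3) _ cont])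
      fix y assume y: "u < y" "y < v"
      have "y^2 < s^2"
        using y uv by (intro power_strict_mono) auto
      then have "0 < y ^ (k - 1) * (real k - (real k + 2) * y^2)"
        using y uv unfolding sign by simp
      then show "\<exists>l. (g has_real_derivative l) (at y) \<and> 0 < l"
        using g' by blast
    qed
  qed
  show "strict_antimono_on {s..} (\<lambda>x::real. x ^ k - x ^ (k + 2))"
    unfolding g_def[symmetric]
  proof (rule monotone_onI)
    fix u v assume uv: "u \<in> {s..}" "v \<in> {s..}" "u < v"
    show "g v < g u"
    proof (rule DERIV_neg_imp_decreasing_open[OF uv(3) _ cont])
      fix y assume y: "u < y" "y < v"
      have "s^2 < y^2"
        using y uv s(1) by (intro power_strict_mono) auto
      moreover have "0 < y"
        using y uv s(1) by simp
      ultimately have "y ^ (k - 1) * (real k - (real k + 2) * y^2) < 0"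
        unfolding sign by (simp add: mult_pos_neg)
      then show "\<exists>l. (g has_real_derivative l) (at y) \<and> l < 0"
        using g' by blast
    qed
  qed
qed

lemma Hfun''_zeros_pos:
  assumes "3 \<le> p" "0 \<le> \<beta>"
  shows "finite {x \<in> {0<..<1}. Hfun'' \<beta> p x = 0} \<and> card {x \<in> {0<..<1}. Hfun'' \<beta> p x = 0} \<le> 2"
proof (cases "\<beta> = 0")
  case True
  have "Hfun'' \<beta> p x \<noteq> 0" if "0 < x" "x < 1" for x
  proof -
    have "x^2 < 1"
      using that by (simp add: abs_square_less_1)
    then show ?thesis
      using True by (simp add: Hfun''_def)
  qed
  then have empty: "{x \<in> {0<..<1}. Hfun'' \<beta> p x = 0} = {}"
    by auto
  show ?thesis
    unfolding empty by simp
next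
  case False
  define C where "C = \<beta> * real p * real (p - 1)"
  define k where "k = p - 2"
  have C: "0 < C"
    using False assms by (simp add: C_def)
  have "{x \<in> {0<..<1}. Hfun'' \<beta> p x = 0} \<subseteq> (\<lambda>x. x ^ k - x ^ (k + 2)) -` {1 / C} \<inter> {0..}"
  proof
    fix x assume x: "x \<in> {x \<in> {0<..<1}. Hfun'' \<beta> p x = 0}"
    then have "x^2 < 1"
      by (simp add: abs_square_less_1)
    moreover have "C * x ^ k = 1 / (1 - x^2)"
      using x by (simp add: Hfun''_def C_def k_def)
    ultimately have "C * x ^ k * (1 - x^2) = 1"
      by simp
    moreover have "C * (x ^ k - x ^ (k + 2)) = C * x ^ k * (1 - x^2)"
      by (simp add: power_add power2_eq_square algebra_simps)
    ultimately have "C * (x ^ k - x ^ (k + 2)) = 1"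
      by simp
    then show "x \<in> (\<lambda>x. x ^ k - x ^ (k + 2)) -` {1 / C} \<inter> {0..}"
      using C x by (simp add: field_simps)
  qed
  moreover have "1 \<le> k"
    using assms by (simp add: k_def)
  ultimately show ?thesis
    using card_level_set_unimodal[OF power_diff_power_unimodal, of k "1 / C"]
      finite_subset card_mono by (metis (no_types, lifting) order.trans)
qed

lemma Hfun''_minus: "even p \<Longrightarrow> Hfun'' \<beta> p (- x) = Hfun'' \<beta> p x"
  by (simp add: Hfun''_def)

lemma Hfun''_neg_if_odd:
  assumes "odd p" "3 \<le> p" "0 \<le> \<beta>" "-1 < x" "x \<le> 0"
  shows "Hfun'' \<beta> p x < 0"
proof -
  have "odd (p - 2)"
    using assms(1,2) by presburger
  then have "x ^ (p - 2) \<le> 0"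
    using assms(2,5) by (simp add: power_le_zero_eq)
  then have "\<beta> * real p * real (p - 1) * x ^ (p - 2) \<le> 0"
    using assms(3) by (simp add: mult_nonneg_nonpos)
  moreover have "x^2 < 1"
    using assms(4,5) by (simp add: abs_square_less_1)
  then have "0 < 1 / (1 - x^2)"
    by simp
  ultimately show ?thesis
    unfolding Hfun''_def by linarith
qed

lemma local_max_on_Hfun_count:
  assumes "-1 \<le> a" "b \<le> 1" "finite Z" "{x \<in> {a<..<b}. Hfun'' \<beta> p x = 0} \<subseteq> Z"
  shows "finite {x. local_max_on (Hfun \<beta> h p) {a<..<b} x}
    \<and> 2 * card {x. local_max_on (Hfun \<beta> h p) {a<..<b} x} \<le> card Z + 2"
proof (rule local_max_on_interval_count[OF _ _ assms(3,4)])
  fix x assume "a < x" "x < b"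
  then show "(Hfun \<beta> h p has_real_derivative Hfun' \<beta> h p x) (at x)"
    "(Hfun' \<beta> h p has_real_derivative Hfun'' \<beta> p x) (at x)"
    using assms(1,2) by (intro Hfun_has_real_derivative Hfun'_has_real_derivative; simp)+
qed

lemma Hfun''_zeros_neg_subset:
  assumes "even p"
  shows "{x \<in> {-1<..<0}. Hfun'' \<beta> p x = 0} \<subseteq> uminus ` {x \<in> {0<..<1}. Hfun'' \<beta> p x = 0}"
proof
  fix x assume "x \<in> {x \<in> {-1<..<0}. Hfun'' \<beta> p x = 0}"
  then have "- x \<in> {x \<in> {0<..<1}. Hfun'' \<beta> p x = 0}"
    using Hfun''_minus[OF assms, of \<beta> x] by simp
  then show "x \<in> uminus ` {x \<in> {0<..<1}. Hfun'' \<beta> p x = 0}"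
    by (rule rev_image_eqI) simp
qed

lemma Hfun''_zeros_subset:
  assumes "3 \<le> p" "0 \<le> \<beta>"
  defines "P \<equiv> {x \<in> {0<..<1}. Hfun'' \<beta> p x = 0}"
  shows "{x \<in> {-1<..<1}. Hfun'' \<beta> p x = 0} \<subseteq> (if even p then P \<union> uminus ` P else P)"
proof
  fix x assume x: "x \<in> {x \<in> {-1<..<1}. Hfun'' \<beta> p x = 0}"
  have "Hfun'' \<beta> p 0 = -1"
    using assms(1) by (simp add: Hfun''_def power_0_left)
  then have "x \<noteq> 0"
    using x by auto
  then consider "0 < x" | "x < 0"
    by linarith
  then show "x \<in> (if even p then P \<union> uminus ` P else P)"
  proof cases
    case 1
    then show ?thesis
      using x by (simp add: P_def)
  next
    case 2
    show ?thesis
    proof (cases "even p")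
      case True
      have "x \<in> {x \<in> {-1<..<0}. Hfun'' \<beta> p x = 0}"
        using x 2 by simp
      then have "x \<in> uminus ` P"
        unfolding P_def by (rule subsetD[OF Hfun''_zeros_neg_subset[OF True]])
      then show ?thesis
        using True by simp
    next
      case False
      then show ?thesis
        using Hfun''_neg_if_odd[OF False assms(1,2), of x] x 2 by simp
    qed
  qed
qed

lemma card_local_max_Hfun:
  assumes "3 \<le> p" "0 \<le> \<beta>"
  shows "finite {x. is_local_max (Hfun \<beta> h p) x}
    \<and> card {x. is_local_max (Hfun \<beta> h p) x} \<le> (if even p then 3 else 2)"
proof -
  define P where "P = {x \<in> {0<..<1}. Hfun'' \<beta> p x = 0}"
  define Z where "Z = (if even p then P \<union> uminus ` P else P)"
  have P: "finite P" "card P \<le> 2"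
    using Hfun''_zeros_pos[OF assms] by (simp_all add: P_def)
  have "card (P \<union> uminus ` P) \<le> 4"
    using card_Un_le[of P "uminus ` P"] card_image_le[OF P(1), of uminus] P(2) by linarith
  then have Z: "finite Z" "card Z \<le> (if even p then 4 else 2)"
    using P by (simp_all add: Z_def)
  have "finite {x. local_max_on (Hfun \<beta> h p) {-1<..<1} x}
    \<and> 2 * card {x. local_max_on (Hfun \<beta> h p) {-1<..<1} x} \<le> card Z + 2"
    by (rule local_max_on_Hfun_count[OF _ _ Z(1) Hfun''_zeros_subset[OF assms, folded P_def Z_def]])
      simp_all
  then show ?thesis
    using Z(2) unfolding is_local_max_Hfun_iff by (cases "even p") simp_all
qed

lemma card_local_max_on_Hfun_halves:
  assumes "even p" "3 \<le> p" "0 \<le> \<beta>"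
  shows "finite {x. local_max_on (Hfun \<beta> h p) {0<..<1} x}
      \<and> card {x. local_max_on (Hfun \<beta> h p) {0<..<1} x} \<le> 2"
    and "finite {x. local_max_on (Hfun \<beta> h p) {-1<..<0} x}
      \<and> card {x. local_max_on (Hfun \<beta> h p) {-1<..<0} x} \<le> 2"
proof -
  define P where "P = {x \<in> {0<..<1}. Hfun'' \<beta> p x = 0}"
  have P: "finite P" "card P \<le> 2"
    using Hfun''_zeros_pos[OF assms(2,3)] by (simp_all add: P_def)
  have "finite {x. local_max_on (Hfun \<beta> h p) {0<..<1} x}
    \<and> 2 * card {x. local_max_on (Hfun \<beta> h p) {0<..<1} x} \<le> card P + 2"
    by (intro local_max_on_Hfun_count P(1)) (simp_all add: P_def)
  then show "finite {x. local_max_on (Hfun \<beta> h p) {0<..<1} x}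
      \<and> card {x. local_max_on (Hfun \<beta> h p) {0<..<1} x} \<le> 2"
    using P(2) by simp
  have "finite {x. local_max_on (Hfun \<beta> h p) {-1<..<0} x}
    \<and> 2 * card {x. local_max_on (Hfun \<beta> h p) {-1<..<0} x} \<le> card (uminus ` P) + 2"
    using P(1) Hfun''_zeros_neg_subset[OF assms(1), of \<beta>]
    by (intro local_max_on_Hfun_count) (simp_all add: P_def)
  then show "finite {x. local_max_on (Hfun \<beta> h p) {-1<..<0} x}
      \<and> card {x. local_max_on (Hfun \<beta> h p) {-1<..<0} x} \<le> 2"
    using P(2) card_image_le[OF P(1), of uminus] by simp
qed

subsection \<open>The supremum of H and beta_tilde\<close>

lemma is_local_max_if_is_global_max: "is_global_max f x \<Longrightarrow> is_local_max f x"
  unfolding is_global_max_def is_local_max_def by (auto intro: exI[of _ 1])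

lemma ex_is_global_max_Hfun: "\<exists>x. is_global_max (Hfun \<beta> h p) x"
  using continuous_attains_sup[of "{-1..1}" "Hfun \<beta> h p"] continuous_on_Hfun
  by (auto simp: is_global_max_def)

lemma supH_eq_if_is_global_max:
  "is_global_max (Hfun \<beta> h p) x \<Longrightarrow> supH \<beta> h p = Hfun \<beta> h p x"
  unfolding supH_def is_global_max_def by (intro cSup_eq_maximum) auto

lemma Hfun_le_supH: "x \<in> {-1..1} \<Longrightarrow> Hfun \<beta> h p x \<le> supH \<beta> h p"
  using ex_is_global_max_Hfun[of \<beta> h p] supH_eq_if_is_global_max
  by (metis is_global_max_def)

lemma is_global_max_Hfun_iff:
  "is_global_max (Hfun \<beta> h p) x \<longleftrightarrow> x \<in> {-1..1} \<and> Hfun \<beta> h p x = supH \<beta> h p"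
  using supH_eq_if_is_global_max[of \<beta> h p x] Hfun_le_supH[of _ \<beta> h p]
  by (auto simp: is_global_max_def)

lemma supH_nonneg: "0 < p \<Longrightarrow> 0 \<le> supH \<beta> h p"
  using Hfun_le_supH[of 0 \<beta> h p] Hfun_0 by simp

lemma supH_eq_0_iff:
  assumes "0 < p"
  shows "supH \<beta> h p = 0 \<longleftrightarrow> (\<forall>x\<in>{-1..1}. Hfun \<beta> h p x \<le> 0)"
proof
  assume nonpos: "\<forall>x\<in>{-1..1}. Hfun \<beta> h p x \<le> 0"
  obtain z where "is_global_max (Hfun \<beta> h p) z"
    using ex_is_global_max_Hfun by blast
  then have "supH \<beta> h p = Hfun \<beta> h p z" "z \<in> {-1..1}"
    by (simp_all add: supH_eq_if_is_global_max is_global_max_def)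
  then have "supH \<beta> h p \<le> 0"
    using nonpos by simp
  then show "supH \<beta> h p = 0"
    using supH_nonneg[OF assms, of \<beta> h] by linarith
next
  assume "supH \<beta> h p = 0"
  then show "\<forall>x\<in>{-1..1}. Hfun \<beta> h p x \<le> 0"
    using Hfun_le_supH[of _ \<beta> h p] by metis
qed

lemma supH_pos_if_h_nonzero:
  assumes "2 \<le> p" "h \<noteq> 0"
  shows "0 < supH \<beta> h p"
proof (rule ccontr)
  assume "\<not> 0 < supH \<beta> h p"
  then have "Hfun \<beta> h p 0 = supH \<beta> h p"
    using supH_nonneg[of p \<beta> h] Hfun_0[of p \<beta> h] assms(1) by simp
  then have "is_local_max (Hfun \<beta> h p) 0"
    by (simp add: is_global_max_Hfun_iff is_local_max_if_is_global_max)
  then have "local_max_on (Hfun \<beta> h p) {-1<..<1} 0"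
    by (simp add: is_local_max_Hfun_iff)
  then have "Hfun' \<beta> h p 0 = 0"
    by (rule deriv_zero_if_local_max_on_interval) (simp add: Hfun_has_real_derivative)
  then show False
    using Hfun'_0[OF assms(1)] assms(2) by simp
qed

lemma supH_0_eq_0_iff: "0 < p \<Longrightarrow> supH \<beta> 0 p = 0 \<longleftrightarrow> (\<forall>x\<in>{-1..1}. \<beta> * x ^ p \<le> Ifun x)"
  by (simp add: supH_eq_0_iff Hfun_def)

lemma closed_zero_sup_betas:
  assumes "0 < p"
  shows "closed {\<beta>. 0 \<le> \<beta> \<and> supH \<beta> 0 p = 0}"
proof -
  have "{\<beta>. 0 \<le> \<beta> \<and> supH \<beta> 0 p = 0} = {0..} \<inter> (\<Inter>x\<in>{-1..1}. {\<beta>. \<beta> * x ^ p \<le> Ifun x})"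
    using supH_0_eq_0_iff[OF assms] by auto
  then show ?thesis
    by (simp add: closed_INT closed_Int closed_Collect_le continuous_on_mult_right)
qed

lemma le_ln_2_if_supH_0_eq_0:
  assumes "0 < p" "supH \<beta> 0 p = 0"
  shows "\<beta> \<le> ln 2"
proof -
  have "\<forall>x\<in>{-1..1}. \<beta> * x ^ p \<le> Ifun x"
    using supH_0_eq_0_iff[OF assms(1)] assms(2) by blast
  then have "\<beta> * 1 ^ p \<le> Ifun 1"
    by (rule bspec) simp
  then show ?thesis
    by (simp add: Ifun_1)
qed

lemma bdd_above_zero_sup_betas:
  assumes "0 < p"
  shows "bdd_above {\<beta>. 0 \<le> \<beta> \<and> supH \<beta> 0 p = 0}"
  by (rule bdd_aboveI[of _ "ln 2"]) (simp add: le_ln_2_if_supH_0_eq_0[OF assms])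

lemma beta_tilde_nonneg_supH_eq_0:
  assumes "0 < p"
  shows "0 \<le> beta_tilde p \<and> supH (beta_tilde p) 0 p = 0"
proof -
  have "0 \<in> {\<beta>. 0 \<le> \<beta> \<and> supH \<beta> 0 p = 0}"
    using supH_0_eq_0_iff[OF assms] Ifun_nonneg by simp
  then have "beta_tilde p \<in> {\<beta>. 0 \<le> \<beta> \<and> supH \<beta> 0 p = 0}"
    unfolding beta_tilde_def
    by (intro closed_contains_Sup closed_zero_sup_betas bdd_above_zero_sup_betas assms) auto
  then show ?thesis
    by simp
qed

lemma supH_0_eq_0_iff_le_beta_tilde:
  assumes "0 < p" "0 \<le> \<beta>"
  shows "supH \<beta> 0 p = 0 \<longleftrightarrow> \<beta> \<le> beta_tilde p"
proof
  assume "supH \<beta> 0 p = 0"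
  then show "\<beta> \<le> beta_tilde p"
    unfolding beta_tilde_def using assms bdd_above_zero_sup_betas by (intro cSup_upper) auto
next
  assume le: "\<beta> \<le> beta_tilde p"
  have "\<beta> * x ^ p \<le> Ifun x" if x: "x \<in> {-1..1}" for x
  proof (cases "0 \<le> x ^ p")
    case True
    then have "\<beta> * x ^ p \<le> beta_tilde p * x ^ p"
      using le by (rule mult_right_mono[rotated])
    also have "\<dots> \<le> Ifun x"
      using beta_tilde_nonneg_supH_eq_0[OF assms(1)] supH_0_eq_0_iff[OF assms(1)] x by blast
    finally show ?thesis .
  next
    case False
    then have "\<beta> * x ^ p \<le> 0"
      using assms(2) by (simp add: mult_nonneg_nonpos)
    then show ?thesis
      using Ifun_nonneg[OF x] by linarith
  qed
  then show "supH \<beta> 0 p = 0"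
    using supH_0_eq_0_iff[OF assms(1)] by blast
qed

lemma supH_eq_0_iff_le_beta_tilde:
  assumes "2 \<le> p" "0 \<le> \<beta>"
  shows "supH \<beta> h p = 0 \<longleftrightarrow> \<beta> \<le> beta_tilde p \<and> h = 0"
proof (cases "h = 0")
  case True
  then show ?thesis
    using supH_0_eq_0_iff_le_beta_tilde[of p \<beta>] assms by simp
next
  case False
  then show ?thesis
    using supH_pos_if_h_nonzero[OF assms(1) False, of \<beta>] by simp
qed

lemma power_le_Ifun_near_0:
  assumes "3 \<le> p" "0 \<le> \<beta>" "\<bar>x\<bar> < 1" "\<beta> * \<bar>x\<bar> \<le> 1 / 2"
  shows "\<beta> * x ^ p \<le> Ifun x"
proof -
  have "\<beta> * x ^ p \<le> \<beta> * \<bar>x\<bar> ^ p"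
    using assms(2) by (intro mult_left_mono) (simp_all add: power_abs[symmetric])
  also have "\<dots> \<le> \<beta> * \<bar>x\<bar> ^ 3"
    using assms by (intro mult_left_mono power_decreasing) auto
  also have "\<dots> = (\<beta> * \<bar>x\<bar>) * x^2"
    by (simp add: power3_eq_cube power2_eq_square abs_mult_self_eq)
  also have "\<dots> \<le> 1 / 2 * x^2"
    using assms(4) by (intro mult_right_mono) auto
  also have "\<dots> \<le> Ifun x"
    using Ifun_ge_half_square[OF assms(3)] by simp
  finally show ?thesis .
qed

lemma supH_0_eq_0_if_le_Ifun_away_from_0:
  assumes "3 \<le> p" "0 \<le> \<beta>" "\<delta> \<le> 1" "\<beta> * \<delta> \<le> 1 / 2"
    and "\<forall>x\<in>{-1..1}. \<delta> \<le> \<bar>x\<bar> \<longrightarrow> \<beta> * x ^ p \<le> Ifun x"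
  shows "supH \<beta> 0 p = 0"
proof -
  have "\<beta> * x ^ p \<le> Ifun x" if x: "x \<in> {-1..1}" for x
  proof (cases "\<delta> \<le> \<bar>x\<bar>")
    case True
    then show ?thesis
      using assms(5) x by blast
  next
    case False
    then have "\<beta> * \<bar>x\<bar> \<le> 1 / 2"
      using assms(2,4) mult_left_mono[of "\<bar>x\<bar>" \<delta> \<beta>] by simp
    moreover have "\<bar>x\<bar> < 1"
      using False assms(3) by simp
    ultimately show ?thesis
      using power_le_Ifun_near_0[OF assms(1,2)] by blast
  qed
  then show ?thesis
    using supH_0_eq_0_iff[of p \<beta>] assms(1) by simp
qed

lemma ex_max_Hfun_away_from_0:
  assumes "\<delta> \<le> 1"
  shows "\<exists>m\<in>{-1..1}. \<delta> \<le> \<bar>m\<bar>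
    \<and> (\<forall>x\<in>{-1..1}. \<delta> \<le> \<bar>x\<bar> \<longrightarrow> Hfun \<beta> h p x \<le> Hfun \<beta> h p m)"
proof -
  define K where "K = {-1..1} \<inter> {x. \<delta> \<le> \<bar>x\<bar>}"
  have "compact K"
    unfolding K_def by (intro compact_Int_closed compact_Icc closed_Collect_le continuous_intros)
  moreover have "1 \<in> K"
    using assms by (simp add: K_def)
  moreover have "continuous_on K (Hfun \<beta> h p)"
    by (rule continuous_on_subset[OF continuous_on_Hfun]) (simp add: K_def)
  ultimately show ?thesis
    using continuous_attains_sup[of K "Hfun \<beta> h p"] unfolding K_def by blast
qed

lemma ex_nonzero_root_Hfun_beta_tilde:
  assumes "3 \<le> p"
  shows "\<exists>m\<in>{-1..1}. m \<noteq> 0 \<and> Hfun (beta_tilde p) 0 p m = 0"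
proof -
  define bt where "bt = beta_tilde p"
  obtain B :: real where B: "B = ln 2 + 1" "1 < B"
    using ln_gt_zero[of 2] by simp
  define \<delta> where "\<delta> = 1 / (2 * B)"
  have p: "0 < p"
    using assms by simp
  have bt: "0 \<le> bt" "supH bt 0 p = 0" "bt \<le> ln 2"
    using beta_tilde_nonneg_supH_eq_0[OF p] le_ln_2_if_supH_0_eq_0[OF p] by (simp_all add: bt_def)
  have \<delta>: "0 < \<delta>" "\<delta> \<le> 1" "B * \<delta> = 1 / 2"
    using B(2) by (simp_all add: \<delta>_def field_simps)
  obtain m where m: "m \<in> {-1..1}" "\<delta> \<le> \<bar>m\<bar>"
    and m_max: "\<forall>x\<in>{-1..1}. \<delta> \<le> \<bar>x\<bar> \<longrightarrow> Hfun bt 0 p x \<le> Hfun bt 0 p m"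
    using ex_max_Hfun_away_from_0[OF \<delta>(2)] by blast
  have "\<not> Hfun bt 0 p m < 0"
  proof
    \<comment> \<open>Otherwise bt could be raised: away from 0 there is room -Hfun bt 0 p m to spare,
       near 0 the quadratic lower bound of Ifun absorbs any bounded \<beta>.\<close>
    assume neg: "Hfun bt 0 p m < 0"
    define c where "c = min (- Hfun bt 0 p m) 1"
    have c: "0 < c" "c \<le> - Hfun bt 0 p m" "c \<le> 1"
      using neg by (auto simp: c_def)
    have "(bt + c) * x ^ p \<le> Ifun x" if x: "x \<in> {-1..1}" "\<delta> \<le> \<bar>x\<bar>" for x
    proof -
      have "\<bar>x\<bar> ^ p \<le> 1"
        using x by (intro power_le_one) auto
      then have "c * x ^ p \<le> c"
        using c(1) abs_ge_self[of "x ^ p"] by (simp add: power_abs mult_left_le)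
      moreover have "bt * x ^ p - Ifun x \<le> Hfun bt 0 p m"
        using m_max x by (simp add: Hfun_def)
      ultimately show ?thesis
        using c(2) by (simp add: algebra_simps)
    qed
    moreover have "(bt + c) * \<delta> \<le> B * \<delta>"
      using bt(3) c(3) B(1) \<delta>(1) by (intro mult_right_mono) auto
    ultimately have "supH (bt + c) 0 p = 0"
      using supH_0_eq_0_if_le_Ifun_away_from_0[OF assms, of "bt + c" \<delta>] bt(1) c(1) \<delta>(2,3)
      by simp
    then have "bt + c \<le> bt"
      using supH_0_eq_0_iff_le_beta_tilde[OF p] bt(1) c(1) by (simp add: bt_def)
    then show False
      using c(1) by simp
  qed
  moreover have "Hfun bt 0 p m \<le> 0"
    using bt(2) supH_eq_0_iff[OF p] m(1) by blast
  ultimately have "Hfun bt 0 p m = 0"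
    by simp
  moreover have "m \<noteq> 0"
    using m(2) \<delta>(1) by auto
  ultimately show ?thesis
    using m(1) by (auto simp: bt_def)
qed

subsection \<open>Three global maximizers\<close>

lemma card_global_max_Hfun:
  assumes "3 \<le> p" "0 \<le> \<beta>"
  shows "finite {x. is_global_max (Hfun \<beta> h p) x}
    \<and> card {x. is_global_max (Hfun \<beta> h p) x} \<le> (if even p then 3 else 2)"
proof -
  have sub: "{x. is_global_max (Hfun \<beta> h p) x} \<subseteq> {x. is_local_max (Hfun \<beta> h p) x}"
    using is_local_max_if_is_global_max by blast
  show ?thesis
    using card_local_max_Hfun[OF assms, of h] finite_subset[OF sub] card_mono[OF _ sub]
    by (meson order.trans)
qed

lemma Hfun_minus_even: "even p \<Longrightarrow> Hfun \<beta> h p (- x) = Hfun \<beta> h p x - 2 * h * x"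
  by (simp add: Hfun_def Ifun_minus)

lemma global_max_Hfun_sign:
  assumes "even p" "2 \<le> p" "h \<noteq> 0" "is_global_max (Hfun \<beta> h p) x"
  shows "0 < h * x"
proof -
  have x: "x \<in> {-1..1}" "Hfun \<beta> h p x = supH \<beta> h p"
    using assms(4) is_global_max_Hfun_iff by blast+
  then have "Hfun \<beta> h p (- x) \<le> Hfun \<beta> h p x"
    using Hfun_le_supH[of "- x" \<beta> h p] by simp
  then have "0 \<le> h * x"
    using Hfun_minus_even[OF assms(1)] by simp
  moreover have "x \<noteq> 0"
    using x supH_pos_if_h_nonzero[OF assms(2,3), of \<beta>] Hfun_0[of p \<beta> h] assms(2) by auto
  ultimately show ?thesis
    using assms(3) by (simp add: less_le)
qed

lemma card_global_max_Hfun_if_h_nonzero: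
  assumes "even p" "3 \<le> p" "0 \<le> \<beta>" "h \<noteq> 0"
  shows "card {x. is_global_max (Hfun \<beta> h p) x} \<le> 2"
proof -
  define I where "I = (if 0 < h then {0<..<1} else {-1<..<0::real})"
  have "{x. is_global_max (Hfun \<beta> h p) x} \<subseteq> {x. local_max_on (Hfun \<beta> h p) I x}"
  proof
    fix x assume "x \<in> {x. is_global_max (Hfun \<beta> h p) x}"
    then have max: "is_global_max (Hfun \<beta> h p) x"
      by simp
    then have loc: "local_max_on (Hfun \<beta> h p) {-1<..<1} x"
      using is_local_max_Hfun_iff is_local_max_if_is_global_max by blast
    moreover have "I \<subseteq> {-1<..<1}"
      by (auto simp: I_def)
    moreover have "x \<in> I"
      using global_max_Hfun_sign[OF assms(1) _ assms(4) max] assms(2) loc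
      by (auto simp: I_def local_max_on_def zero_less_mult_iff)
    ultimately show "x \<in> {x. local_max_on (Hfun \<beta> h p) I x}"
      by (simp add: local_max_on_subset)
  qed
  moreover have "finite {x. local_max_on (Hfun \<beta> h p) I x}
    \<and> card {x. local_max_on (Hfun \<beta> h p) I x} \<le> 2"
    using card_local_max_on_Hfun_halves[OF assms(1-3), of h] by (simp add: I_def)
  ultimately show ?thesis
    by (meson card_mono order.trans)
qed

lemma global_max_Hfun_below_beta_tilde:
  assumes "even p" "3 \<le> p" "0 \<le> \<beta>" "\<beta> < beta_tilde p" "is_global_max (Hfun \<beta> 0 p) x"
  shows "x = 0"
proof (rule ccontr)
  assume "x \<noteq> 0"
  have p: "0 < p"
    using assms(2) by simp
  have x: "x \<in> {-1..1}" "Hfun \<beta> 0 p x = supH \<beta> 0 p"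
    using assms(5) is_global_max_Hfun_iff by blast+
  have "supH \<beta> 0 p = 0"
    using supH_0_eq_0_iff_le_beta_tilde[OF p assms(3)] assms(4) by simp
  then have "Ifun x = \<beta> * x ^ p"
    using x(2) by (simp add: Hfun_def)
  also have "\<dots> < beta_tilde p * x ^ p"
    using assms(1,4) \<open>x \<noteq> 0\<close> by (intro mult_strict_right_mono) (simp_all add: zero_less_power_eq)
  also have "\<dots> \<le> Ifun x"
    using beta_tilde_nonneg_supH_eq_0[OF p] supH_0_eq_0_iff[OF p] x(1) by blast
  finally show False
    by simp
qed

lemma even_card_if_symmetric:
  fixes G :: "real set"
  assumes "finite G" "0 \<notin> G" "\<And>x. x \<in> G \<Longrightarrow> - x \<in> G"
  shows "even (card G)"
proof -
  define A where "A = G \<inter> {0<..}"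
  have "G = A \<union> uminus ` A"
  proof
    show "G \<subseteq> A \<union> uminus ` A"
    proof
      fix x assume x: "x \<in> G"
      show "x \<in> A \<union> uminus ` A"
      proof (cases "0 < x")
        case True
        then show ?thesis
          using x by (simp add: A_def)
      next
        case False
        then have "- x \<in> A"
          using x assms(2,3) by (cases "x = 0") (auto simp: A_def)
        then show ?thesis
          by (metis UnI2 minus_minus rev_image_eqI)
      qed
    qed
    show "A \<union> uminus ` A \<subseteq> G"
      using assms(3) by (auto simp: A_def)
  qed
  moreover have "A \<inter> uminus ` A = {}"
    by (auto simp: A_def)
  moreover have "card (uminus ` A) = card A"
    by (rule card_image) (simp add: inj_on_def)
  moreover have "finite A"
    using assms(1) by (simp add: A_def)
  ultimately have "card G = 2 * card A"
    by (metis card_Un_disjoint finite_imageI mult_2)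
  then show ?thesis
    by simp
qed

lemma card_global_max_Hfun_eq_3_imp:
  assumes "3 \<le> p" "0 \<le> \<beta>" "card {x. is_global_max (Hfun \<beta> h p) x} = 3"
  shows "even p \<and> h = 0 \<and> \<beta> = beta_tilde p"
proof -
  let ?G = "{x. is_global_max (Hfun \<beta> h p) x}"
  have p: "0 < p" "2 \<le> p"
    using assms(1) by simp_all
  have ev: "even p"
    using card_global_max_Hfun[OF assms(1,2), of h] assms(3) by (cases "even p") simp_all
  have h: "h = 0"
    using card_global_max_Hfun_if_h_nonzero[OF ev assms(1,2)] assms(3) by force
  have "\<not> \<beta> < beta_tilde p"
  proof
    assume "\<beta> < beta_tilde p"
    then have "?G \<subseteq> {0}"
      using global_max_Hfun_below_beta_tilde[OF ev assms(1,2)] h by blast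
    then have "card ?G \<le> 1"
      using card_mono[of "{0::real}"] by fastforce
    then show False
      using assms(3) by simp
  qed
  moreover have "\<not> beta_tilde p < \<beta>"
  proof
    assume "beta_tilde p < \<beta>"
    then have "0 < supH \<beta> h p"
      using supH_eq_0_iff_le_beta_tilde[OF p(2) assms(2), of h] supH_nonneg[OF p(1), of \<beta> h]
      by simp
    then have "0 \<notin> ?G"
      using Hfun_0[OF p(1)] is_global_max_Hfun_iff by simp
    moreover have "- x \<in> ?G" if "x \<in> ?G" for x
      using that Hfun_minus_even[OF ev, of \<beta> h x] h is_global_max_Hfun_iff by auto
    moreover have "finite ?G"
      using assms(3) by (metis card.infinite zero_neq_numeral)
    ultimately have "even (card ?G)"
      by (intro even_card_if_symmetric) auto
    then show False
      using assms(3) by simp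
  qed
  ultimately show ?thesis
    using ev h by simp
qed

lemma card_global_max_Hfun_beta_tilde:
  assumes "even p" "3 \<le> p"
  shows "card {x. is_global_max (Hfun (beta_tilde p) 0 p) x} = 3"
proof -
  let ?G = "{x. is_global_max (Hfun (beta_tilde p) 0 p) x}"
  have p: "0 < p"
    using assms(2) by simp
  obtain m where m: "m \<in> {-1..1}" "m \<noteq> 0" "Hfun (beta_tilde p) 0 p m = 0"
    using ex_nonzero_root_Hfun_beta_tilde[OF assms(2)] by blast
  have bt: "0 \<le> beta_tilde p" "supH (beta_tilde p) 0 p = 0"
    using beta_tilde_nonneg_supH_eq_0[OF p] by simp_all
  have "{0, m, - m} \<subseteq> ?G"
    using m bt(2) Hfun_0[OF p] Hfun_minus_even[OF assms(1), of "beta_tilde p" 0 m]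
    by (auto simp: is_global_max_Hfun_iff)
  moreover have "card {0, m, - m} = 3"
    using m(2) by simp
  moreover have "finite ?G" "card ?G \<le> 3"
    using card_global_max_Hfun[OF assms(2) bt(1), of 0] assms(1) by simp_all
  ultimately show ?thesis
    by (metis card_mono le_antisym)
qed

theorem mainTheorem9:
  fixes p :: nat and \<beta> h :: real
  assumes "p \<ge> 3" and "\<beta> \<ge> 0"
  shows "(supH \<beta> h p \<ge> 0 \<and>
         (supH \<beta> h p = 0 \<longleftrightarrow> (\<beta> \<le> beta_tilde p \<and> h = 0))) \<and>
         (\<forall>x. is_local_max (Hfun \<beta> h p) x \<longrightarrow> -1 < x \<and> x < 1) \<and>
         (p = 3 \<longrightarrow> finite {x. is_local_max (Hfun \<beta> h p) x} \<and>
                   card {x. is_local_max (Hfun \<beta> h p) x} \<le> 2) \<and>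
         (p \<ge> 4 \<longrightarrow> finite {x. is_local_max (Hfun \<beta> h p) x} \<and>
                   card {x. is_local_max (Hfun \<beta> h p) x} \<le> 3) \<and>
         (card {x. is_global_max (Hfun \<beta> h p) x} = 3 \<longleftrightarrow>
           (p \<ge> 4 \<and> even p \<and> h = 0 \<and> \<beta> = beta_tilde p))"
proof -
  have p: "0 < p" "2 \<le> p"
    using assms(1) by simp_all
  have local_max: "finite {x. is_local_max (Hfun \<beta> h p) x}"
    "card {x. is_local_max (Hfun \<beta> h p) x} \<le> (if even p then 3 else 2)"
    using card_local_max_Hfun[OF assms] by simp_all
  have global_max: "card {x. is_global_max (Hfun \<beta> h p) x} = 3
    \<longleftrightarrow> (p \<ge> 4 \<and> even p \<and> h = 0 \<and> \<beta> = beta_tilde p)"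
  proof
    assume "card {x. is_global_max (Hfun \<beta> h p) x} = 3"
    then have "even p \<and> h = 0 \<and> \<beta> = beta_tilde p"
      using card_global_max_Hfun_eq_3_imp[OF assms] by blast
    moreover have "p \<ge> 4"
      using calculation assms(1) by (cases "p = 3") auto
    ultimately show "p \<ge> 4 \<and> even p \<and> h = 0 \<and> \<beta> = beta_tilde p"
      by simp
  next
    assume "p \<ge> 4 \<and> even p \<and> h = 0 \<and> \<beta> = beta_tilde p"
    then show "card {x. is_global_max (Hfun \<beta> h p) x} = 3"
      using card_global_max_Hfun_beta_tilde[OF _ assms(1)] by blast
  qed
  show ?thesis
    using supH_nonneg[OF p(1)] supH_eq_0_iff_le_beta_tilde[OF p(2) assms(2)]
      is_local_max_Hfun_interior local_max global_max
    by (auto split: if_splits)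
qed

end
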